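(* Let $\Lambda=[-L,L]^d\cap\mathbb{Z}^d=\bigcup_{m=1}^M\Lambda_m$ be a decomposition into disjoint boxes and $\beta=(\beta_1,\dots,\beta_M)\in(0,\infty]^M$. Then, almost surely, \[ \big\|\mathcal{D}^-_\beta\,h_\Lambda^{1/2}\big\|\leq\sqrt{\Delta(\mathcal{G}_M)+1}, \] where $\|\cdot\|$ is the operator norm.
   Context: Fix $d\geq1$, $k_{\max}\in(0,\infty)$, a bounded probability density $\nu$ with $\operatorname{supp}\nu=[0,k_{\max}]$; $(k_x)_{x\in\Lambda}$ i.i.d. with density $\nu$. $|x|$ is the $\ell^1$-norm on $\mathbb{Z}^d$; a box is $([a_1,b_1]\times\cdots\times[a_d,b_d])\cap\mathbb{Z}^d$. For a box $X$, $h_X$ is the real symmetric matrix on $\ell^2(X)$ with $\langle\delta_x,h_X\delta_y\rangle=2d+k_x$ if $x=y$, $-1$ if $|x-y|=1$, $0$ otherwise (the $d$-dimensional finite-volume Anderson model; $h_{\Lambda_m}$ is the principal submatrix of $h_\Lambda$ on $\Lambda_m$; these matrices are a.s. positive definite). $\mathcal{D}^-_\beta=\bigoplus_{m=1}^Mh_{\Lambda_m}^{-1/2}\tanh(\beta_mh_{\Lambda_m}^{1/2})$ on $\bigoplus_m\ell^2(\Lambda_m)=\ell^2(\Lambda)$, with the convention $\tanh(\infty\cdot h^{1/2})=\mathbb{1}$. The dual graph $\mathcal{G}_M$ of the decomposition has vertices $\Lambda_1,\dots,\Lambda_M$ and an edge $\{\Lambda_j,\Lambda_k\}$ iff $\min\{|x-y|:x\in\Lambda_j,y\in\Lambda_k\}=1$;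 $\Delta(\mathcal{G}_M)$ is its maximum degree. *)

theory Defs
  imports "HOL-Probability.Probability"
begin

text \<open>Points of Z^d are integer lists of length d.  Matrices on l^2(X), X a finite set
of points, are functions of two points, vanishing outside X x X.\<close>

definition l1dist :: "int list \<Rightarrow> int list \<Rightarrow> nat" where
  "l1dist x y = (\<Sum>i<length x. nat \<bar>x ! i - y ! i\<bar>)"

definition box :: "nat \<Rightarrow> (nat \<Rightarrow> int) \<Rightarrow> (nat \<Rightarrow> int) \<Rightarrow> int list set" where
  "box d a b = {x. length x = d \<and> (\<forall>i<d. a i \<le> x ! i \<and> x ! i \<le> b i)}"

definition is_box :: "nat \<Rightarrow> int list set \<Rightarrow> bool" where
  "is_box d X \<longleftrightarrow> (\<exists>a b. (\<forall>i<d. a i \<le> b i) \<and> X = box d a b)"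

definition hmat :: "nat \<Rightarrow> (int list \<Rightarrow> real) \<Rightarrow> int list set \<Rightarrow> int list \<Rightarrow> int list \<Rightarrow> real" where
  "hmat d k X x y =
     (if x \<in> X \<and> y \<in> X then
        (if x = y then 2 * real d + k x else if l1dist x y = 1 then -1 else 0)
      else 0)"

definition mvec :: "int list set \<Rightarrow> (int list \<Rightarrow> int list \<Rightarrow> real) \<Rightarrow> (int list \<Rightarrow> real) \<Rightarrow> int list \<Rightarrow> real" where
  "mvec X A v = (\<lambda>x. \<Sum>y\<in>X. A x y * v y)"

definition mmul :: "int list set \<Rightarrow> (int list \<Rightarrow> int list \<Rightarrow> real) \<Rightarrow> (int list \<Rightarrow> int list \<Rightarrow> real) \<Rightarrow> int list \<Rightarrow> int list \<Rightarrow> real" where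
  "mmul X A B = (\<lambda>x y. \<Sum>z\<in>X. A x z * B z y)"

definition matfun :: "(real \<Rightarrow> real) \<Rightarrow> int list set \<Rightarrow> (int list \<Rightarrow> int list \<Rightarrow> real) \<Rightarrow> int list \<Rightarrow> int list \<Rightarrow> real" where
  "matfun f X A = (THE B. (\<forall>x y. x \<notin> X \<or> y \<notin> X \<longrightarrow> B x y = 0) \<and>
      (\<forall>lam v. (\<forall>x. x \<notin> X \<longrightarrow> v x = 0) \<and> (\<forall>x\<in>X. mvec X A v x = lam * v x)
          \<longrightarrow> (\<forall>x\<in>X. mvec X B v x = f lam * v x)))"

definition opnorm :: "int list set \<Rightarrow> (int list \<Rightarrow> int list \<Rightarrow> real) \<Rightarrow> real" where
  "opnorm X A = Sup {sqrt (\<Sum>x\<in>X. (mvec X A v x)\<^sup>2) | v.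
        (\<forall>x. x \<notin> X \<longrightarrow> v x = 0) \<and> (\<Sum>x\<in>X. (v x)\<^sup>2) \<le> 1}"

definition tanh_ext :: "ereal \<Rightarrow> real \<Rightarrow> real" where
  "tanh_ext \<beta> s = (if \<beta> = \<infinity> then 1 else tanh (real_of_ereal \<beta> * s))"

definition Dminus :: "nat \<Rightarrow> (int list \<Rightarrow> real) \<Rightarrow> nat \<Rightarrow> (nat \<Rightarrow> int list set) \<Rightarrow> (nat \<Rightarrow> ereal)
     \<Rightarrow> int list \<Rightarrow> int list \<Rightarrow> real" where
  "Dminus d k M Lam \<beta> = (\<lambda>x y. \<Sum>m\<in>{1..M}.
      mmul (Lam m) (matfun (\<lambda>t. 1 / sqrt t) (Lam m) (hmat d k (Lam m)))
                   (matfun (\<lambda>t. tanh_ext (\<beta> m) (sqrt t)) (Lam m) (hmat d k (Lam m))) x y)"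

definition dual_adj :: "int list set \<Rightarrow> int list set \<Rightarrow> bool" where
  "dual_adj A B \<longleftrightarrow> Min {l1dist x y | x y. x \<in> A \<and> y \<in> B} = 1"

definition max_degree :: "nat \<Rightarrow> (nat \<Rightarrow> int list set) \<Rightarrow> nat" where
  "max_degree M Lam = Max ((\<lambda>j. card {i\<in>{1..M}. i \<noteq> j \<and> dual_adj (Lam j) (Lam i)}) ` {1..M})"

end

theory Submission
  imports Defs
begin

text \<open>
Write H for h_Lambda, D for D^-_beta and g_m(t) = t^(-1/2) tanh(beta_m t^(1/2)), so that D acts
on l^2(Lambda_m) as g_m(h_(Lambda_m)). As D and H^(1/2) are symmetric,
||D H^(1/2)|| = ||H^(1/2) D||, and ||H^(1/2) D p||^2 = <Dp, H Dp>.

Split a vector w into its restrictions w_m to the blocks. Since H is positive semidefinite,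
Cauchy-Schwarz gives <w_j, H w_m> <= a_j a_m with a_m^2 = <w_m, H w_m>, and <w_j, H w_m> = 0
unless j = m or Lambda_j and Lambda_m are adjacent in the dual graph. Bounding
a_j a_m <= (a_j^2 + a_m^2) / 2 over the edges yields
<w, H w> <= (Delta + 1) sum_m <w, h_(Lambda_m) w>. For w = Dp the m-th summand is
sum_i lambda_i g_m(lambda_i)^2 <u_i, p>^2 over an eigenbasis (u_i, lambda_i) of h_(Lambda_m),
and lambda g_m(lambda)^2 = tanh(beta_m lambda^(1/2))^2 <= 1. Hence
||H^(1/2) D p||^2 <= (Delta + 1) ||p||^2.

Positivity of H holds as soon as all k_x >= 0, which is almost sure because supp nu = [0, k_max];
this is the only role of randomness. The functional calculus rests on the spectral theorem, proved
by maximising the Rayleigh quotient on successive orthogonal complements.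
\<close>

section \<open>The Hilbert space l^2(X)\<close>

abbreviation vanishes_outside :: "int list set \<Rightarrow> (int list \<Rightarrow> real) \<Rightarrow> bool" where
  "vanishes_outside X v \<equiv> \<forall>x. x \<notin> X \<longrightarrow> v x = 0"

definition l2_inner :: "int list set \<Rightarrow> (int list \<Rightarrow> real) \<Rightarrow> (int list \<Rightarrow> real) \<Rightarrow> real" where
  "l2_inner X u v = (\<Sum>x\<in>X. u x * v x)"

lemma l2_inner_commute: "l2_inner X u v = l2_inner X v u"
  unfolding l2_inner_def by (simp add: mult.commute)

lemma l2_inner_self_nonneg: "0 \<le> l2_inner X v v"
  unfolding l2_inner_def by (simp add: sum_nonneg)

lemma l2_inner_self_eq_0:
  assumes "finite X" "l2_inner X v v = 0" "x \<in> X"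
  shows "v x = 0"
  using assms sum_nonneg_eq_0_iff[OF assms(1), of "\<lambda>x. v x * v x"] by (simp add: l2_inner_def)

lemma l2_inner_add_scaled_left:
  "l2_inner X (\<lambda>x. p x + t * q x) r = l2_inner X p r + t * l2_inner X q r"
  by (simp add: l2_inner_def algebra_simps sum.distrib sum_distrib_left)

lemma l2_inner_add_scaled_right:
  "l2_inner X p (\<lambda>x. q x + t * r x) = l2_inner X p q + t * l2_inner X p r"
  by (simp add: l2_inner_def algebra_simps sum.distrib sum_distrib_left)

lemma l2_inner_diff_right: "l2_inner X p (\<lambda>x. q x - r x) = l2_inner X p q - l2_inner X p r"
  by (simp add: l2_inner_def algebra_simps sum_subtractf)

lemma l2_inner_divide_left: "l2_inner X (\<lambda>x. p x / c) q = l2_inner X p q / c"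
  by (simp add: l2_inner_def sum_divide_distrib)

lemma l2_inner_divide_right: "l2_inner X p (\<lambda>x. q x / c) = l2_inner X p q / c"
  by (simp add: l2_inner_def sum_divide_distrib)

lemma l2_inner_scale_left: "l2_inner X (\<lambda>x. c * p x) q = c * l2_inner X p q"
  by (simp add: l2_inner_def sum_distrib_left mult.assoc)

lemma l2_inner_scale_right: "l2_inner X p (\<lambda>x. c * q x) = c * l2_inner X p q"
  by (simp add: l2_inner_def sum_distrib_left mult.left_commute)

lemma l2_inner_sum_left: "l2_inner X (\<lambda>x. \<Sum>i\<in>I. p i x) q = (\<Sum>i\<in>I. l2_inner X (p i) q)"
  by (simp add: l2_inner_def sum_distrib_right sum.swap[of _ X])

lemma l2_inner_sum_right: "l2_inner X p (\<lambda>x. \<Sum>i\<in>I. q i x) = (\<Sum>i\<in>I. l2_inner X p (q i))"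
  by (simp add: l2_inner_def sum_distrib_left sum.swap[of _ X])

lemma l2_inner_cong_right: "(\<And>x. x \<in> X \<Longrightarrow> q x = q' x) \<Longrightarrow> l2_inner X p q = l2_inner X p q'"
  unfolding l2_inner_def by (intro sum.cong refl) simp

lemma l2_inner_cauchy_schwarz: "(l2_inner X p q)\<^sup>2 \<le> l2_inner X p p * l2_inner X q q"
  unfolding l2_inner_def using Cauchy_Schwarz_ineq_sum[of p q X] by (simp add: power2_eq_square)

lemma l2_inner_le_sqrt: "l2_inner X p q \<le> sqrt (l2_inner X p p) * sqrt (l2_inner X q q)"
proof -
  have "\<bar>l2_inner X p q\<bar> \<le> sqrt (l2_inner X p p * l2_inner X q q)"
    using real_sqrt_le_mono[OF l2_inner_cauchy_schwarz[of X p q]] by simp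
  then show ?thesis
    by (simp add: real_sqrt_mult)
qed

lemma l2_inner_self_normalized:
  assumes "l2_inner X z z \<noteq> 0"
  shows "l2_inner X (\<lambda>x. z x / sqrt (l2_inner X z z)) (\<lambda>x. z x / sqrt (l2_inner X z z)) = 1"
  using assms l2_inner_self_nonneg[of X z]
  by (simp add: l2_inner_divide_left l2_inner_divide_right)

lemma continuous_on_l2_inner:
  fixes p q :: "(int list \<Rightarrow> real) \<Rightarrow> int list \<Rightarrow> real"
  assumes "continuous_on UNIV p" "continuous_on UNIV q"
  shows "continuous_on UNIV (\<lambda>v. l2_inner X (p v) (q v))"
  unfolding l2_inner_def
  by (intro continuous_on_sum continuous_on_mult
        continuous_on_product_then_coordinatewise[OF assms(1)]
        continuous_on_product_then_coordinatewise[OF assms(2)])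

definition orthonormal_on :: "int list set \<Rightarrow> (nat \<Rightarrow> int list \<Rightarrow> real) \<Rightarrow> nat \<Rightarrow> bool" where
  "orthonormal_on X u n \<longleftrightarrow> (\<forall>i<n. vanishes_outside X (u i)) \<and>
      (\<forall>i<n. \<forall>j<n. l2_inner X (u i) (u j) = (if i = j then 1 else 0))"

lemma l2_inner_orthonormal_sum:
  assumes "orthonormal_on X u n" "j < n"
  shows "l2_inner X (u j) (\<lambda>x. \<Sum>i<n. a i * u i x) = a j"
proof -
  have "l2_inner X (u j) (\<lambda>x. \<Sum>i<n. a i * u i x) = (\<Sum>i<n. a i * l2_inner X (u j) (u i))"
    by (simp add: l2_inner_sum_right l2_inner_def sum_distrib_left mult_ac)
  also have "\<dots> = (\<Sum>i<n. if i = j then a i else 0)"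
    using assms by (intro sum.cong refl) (auto simp: orthonormal_on_def)
  finally show ?thesis
    using assms(2) by simp
qed

lemma bessel_inequality:
  assumes "orthonormal_on X u n"
  shows "(\<Sum>i<n. (l2_inner X (u i) w)\<^sup>2) \<le> l2_inner X w w"
proof -
  define c where "c i = l2_inner X (u i) w" for i
  define s where "s x = (\<Sum>i<n. c i * u i x)" for x
  have us: "l2_inner X (u i) s = c i" if "i < n" for i
    unfolding s_def using l2_inner_orthonormal_sum[OF assms that] .
  have ws: "l2_inner X w s = (\<Sum>i<n. (c i)\<^sup>2)"
    unfolding s_def[abs_def] l2_inner_sum_right l2_inner_scale_right
    by (simp add: c_def l2_inner_commute[of X w] power2_eq_square)
  have ss: "l2_inner X s s = (\<Sum>i<n. (c i)\<^sup>2)"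
    unfolding s_def[abs_def] l2_inner_sum_left l2_inner_scale_left
    using us by (simp add: s_def[abs_def] power2_eq_square)
  have "0 \<le> l2_inner X (\<lambda>x. w x - s x) (\<lambda>x. w x - s x)"
    by (rule l2_inner_self_nonneg)
  also have "\<dots> = l2_inner X w w - 2 * l2_inner X w s + l2_inner X s s"
    by (simp add: l2_inner_def power2_eq_square algebra_simps sum.distrib sum_subtractf
          sum_distrib_left)
  finally show ?thesis
    using ws ss by (simp add: c_def)
qed

lemma orthonormal_on_card_le:
  assumes "orthonormal_on X u n" "finite X"
  shows "n \<le> card X"
proof -
  define e where "e y = (\<lambda>x::int list. if x = y then 1 else 0 :: real)" for y
  have ue: "l2_inner X (u i) (e y) = u i y" if "y \<in> X" for i y
    using that assms(2) by (simp add: l2_inner_def e_def if_distrib cong: if_cong)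
  have "real n = (\<Sum>i<n. l2_inner X (u i) (u i))"
    using assms(1) by (simp add: orthonormal_on_def)
  also have "\<dots> = (\<Sum>i<n. \<Sum>y\<in>X. (u i y)\<^sup>2)"
    by (simp add: l2_inner_def power2_eq_square)
  also have "\<dots> = (\<Sum>y\<in>X. \<Sum>i<n. (l2_inner X (u i) (e y))\<^sup>2)"
    by (subst sum.swap) (simp add: ue)
  also have "\<dots> \<le> (\<Sum>y\<in>X. l2_inner X (e y) (e y))"
    by (intro sum_mono bessel_inequality assms(1))
  also have "\<dots> = card X"
    using assms(2) by (simp add: l2_inner_def e_def if_distrib cong: if_cong)
  finally show ?thesis
    by simp
qed

definition symmetric_on :: "int list set \<Rightarrow> (int list \<Rightarrow> int list \<Rightarrow> real) \<Rightarrow> bool" where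
  "symmetric_on X A \<longleftrightarrow> (\<forall>x\<in>X. \<forall>y\<in>X. A x y = A y x)"

lemma l2_inner_mvec_commute:
  assumes "symmetric_on X A"
  shows "l2_inner X p (mvec X A q) = l2_inner X (mvec X A p) q"
proof -
  have "l2_inner X p (mvec X A q) = (\<Sum>x\<in>X. \<Sum>y\<in>X. p x * A x y * q y)"
    by (simp add: l2_inner_def mvec_def sum_distrib_left mult.assoc)
  also have "\<dots> = (\<Sum>y\<in>X. \<Sum>x\<in>X. A y x * p x * q y)"
    using assms unfolding symmetric_on_def by (subst sum.swap) (simp add: mult_ac)
  also have "\<dots> = l2_inner X (mvec X A p) q"
    by (simp add: l2_inner_def mvec_def sum_distrib_right)
  finally show ?thesis .
qed

lemma mvec_add_scaled: "mvec X A (\<lambda>x. p x + t * q x) = (\<lambda>y. mvec X A p y + t * mvec X A q y)"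
  by (simp add: mvec_def algebra_simps sum.distrib sum_distrib_left)

lemma mvec_divide: "mvec X A (\<lambda>x. p x / c) = (\<lambda>y. mvec X A p y / c)"
  by (simp add: mvec_def sum_divide_distrib)

lemma mvec_sum: "mvec X A (\<lambda>x. \<Sum>i\<in>I. p i x) = (\<lambda>y. \<Sum>i\<in>I. mvec X A (p i) y)"
  by (simp add: mvec_def sum_distrib_left sum.swap[of _ X])

lemma mvec_cong: "(\<And>y. y \<in> X \<Longrightarrow> p y = q y) \<Longrightarrow> mvec X A p = mvec X A q"
  unfolding mvec_def by (intro ext sum.cong refl) simp

lemma mvec_mmul: "mvec X (mmul X A B) v = mvec X A (mvec X B v)"
proof
  fix x
  have "mvec X (mmul X A B) v x = (\<Sum>y\<in>X. \<Sum>z\<in>X. A x z * (B z y * v y))"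
    by (simp add: mvec_def mmul_def sum_distrib_right mult.assoc)
  also have "\<dots> = mvec X A (mvec X B v) x"
    by (subst sum.swap) (simp add: mvec_def sum_distrib_left)
  finally show "mvec X (mmul X A B) v x = mvec X A (mvec X B v) x" .
qed

lemma continuous_on_mvec: "continuous_on UNIV (mvec X A)"
  unfolding mvec_def
  by (intro continuous_on_coordinatewise_then_product continuous_on_sum continuous_on_mult
        continuous_on_const continuous_on_product_coordinates)

lemma l2_inner_mvec_restrict:
  assumes fin: "finite L" and sub: "Y \<subseteq> L" and A: "\<And>x y. x \<in> Y \<Longrightarrow> y \<in> Y \<Longrightarrow> A' x y = A x y"
  shows "l2_inner L (\<lambda>x. if x \<in> Y then w x else 0) (mvec L A (\<lambda>x. if x \<in> Y then w x else 0)) =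
    l2_inner Y w (mvec Y A' w)"
proof -
  have restrict: "(\<Sum>x\<in>L. (if x \<in> Y then w x else 0) * g x) = (\<Sum>x\<in>Y. w x * g x)" for g
  proof -
    have "(\<Sum>x\<in>L. (if x \<in> Y then w x else 0) * g x) = (\<Sum>x\<in>L. if x \<in> Y then w x * g x else 0)"
      by (intro sum.cong) auto
    also have "\<dots> = (\<Sum>x\<in>Y. w x * g x)"
      using sum.inter_restrict[OF fin, of "\<lambda>x. w x * g x" Y] sub by (simp add: Int_absorb1)
    finally show ?thesis .
  qed
  have "mvec L A (\<lambda>x. if x \<in> Y then w x else 0) x = mvec Y A' w x" if "x \<in> Y" for x
    using restrict[of "A x"] that A by (simp add: mvec_def mult.commute)
  then show ?thesis
    by (simp add: l2_inner_def restrict)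
qed

lemma l2_bound_transpose:
  assumes symA: "symmetric_on X A" and symB: "symmetric_on X B" and c: "0 \<le> c"
    and bound: "\<And>p. l2_inner X (mvec X A (mvec X B p)) (mvec X A (mvec X B p)) \<le> c * l2_inner X p p"
  shows "l2_inner X (mvec X B (mvec X A v)) (mvec X B (mvec X A v)) \<le> c * l2_inner X v v"
proof -
  define z where "z = mvec X B (mvec X A v)"
  have "l2_inner X z z = l2_inner X (mvec X A (mvec X B z)) v"
    unfolding z_def
    by (simp add: l2_inner_mvec_commute[OF symB, symmetric] l2_inner_mvec_commute[OF symA]
        l2_inner_commute[of X _ v])
  then have "(l2_inner X z z)\<^sup>2 \<le>
      l2_inner X (mvec X A (mvec X B z)) (mvec X A (mvec X B z)) * l2_inner X v v"
    by (metis l2_inner_cauchy_schwarz)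
  also have "\<dots> \<le> (c * l2_inner X z z) * l2_inner X v v"
    by (intro mult_right_mono bound l2_inner_self_nonneg)
  finally have *: "l2_inner X z z * l2_inner X z z \<le> l2_inner X z z * (c * l2_inner X v v)"
    by (simp add: power2_eq_square mult_ac)
  have "l2_inner X z z \<le> c * l2_inner X v v"
  proof (cases "l2_inner X z z = 0")
    case True
    then show ?thesis
      using c l2_inner_self_nonneg[of X v] by simp
  next
    case False
    then have "0 < l2_inner X z z"
      using l2_inner_self_nonneg[of X z] by linarith
    then show ?thesis
      using * by simp
  qed
  then show ?thesis
    by (simp only: z_def)
qed

lemma opnorm_le_sqrt:
  assumes c: "0 \<le> c"
    and bound: "\<And>v. vanishes_outside X v \<Longrightarrow>
      l2_inner X (mvec X A v) (mvec X A v) \<le> c * l2_inner X v v"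
  shows "opnorm X A \<le> sqrt c"
proof -
  let ?S = "{sqrt (\<Sum>x\<in>X. (mvec X A v x)\<^sup>2) |v. vanishes_outside X v \<and> (\<Sum>x\<in>X. (v x)\<^sup>2) \<le> 1}"
  have "sqrt (\<Sum>x\<in>X. (mvec X A (\<lambda>_. 0) x)\<^sup>2) \<in> ?S"
    by (intro CollectI exI[of _ "\<lambda>_. 0"]) simp
  moreover have "r \<le> sqrt c" if "r \<in> ?S" for r
  proof -
    obtain v where r: "r = sqrt (\<Sum>x\<in>X. (mvec X A v x)\<^sup>2)"
      and v: "vanishes_outside X v" "(\<Sum>x\<in>X. (v x)\<^sup>2) \<le> 1"
      using \<open>r \<in> ?S\<close> by blast
    have "(\<Sum>x\<in>X. (mvec X A v x)\<^sup>2) \<le> c * (\<Sum>x\<in>X. (v x)\<^sup>2)"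
      using bound[OF v(1)] by (simp add: l2_inner_def power2_eq_square)
    also have "\<dots> \<le> c"
      using mult_left_le[OF v(2) c] .
    finally show ?thesis
      by (simp add: r)
  qed
  ultimately show ?thesis
    unfolding opnorm_def by (intro cSup_least) blast+
qed

section \<open>The spectral theorem for real symmetric matrices\<close>

definition orth_complement ::
    "int list set \<Rightarrow> (nat \<Rightarrow> int list \<Rightarrow> real) \<Rightarrow> nat \<Rightarrow> (int list \<Rightarrow> real) set" where
  "orth_complement X u n = {z. vanishes_outside X z \<and> (\<forall>i<n. l2_inner X (u i) z = 0)}"

lemma orth_complement_add_scaled:
  "p \<in> orth_complement X u n \<Longrightarrow> q \<in> orth_complement X u n \<Longrightarrow>
     (\<lambda>x. p x + t * q x) \<in> orth_complement X u n"
  by (simp add: orth_complement_def l2_inner_add_scaled_right)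

lemma orth_complement_divide:
  "p \<in> orth_complement X u n \<Longrightarrow> (\<lambda>x. p x / c) \<in> orth_complement X u n"
  by (simp add: orth_complement_def l2_inner_divide_right)

lemma compact_orth_complement_sphere:
  assumes "finite X"
  shows "compact (orth_complement X u n \<inter> {v. l2_inner X v v = 1})" (is "compact ?K")
proof -
  define S where "S x = (if x \<in> X then {-1..1} else {0::real})" for x
  have "compactin (product_topology (\<lambda>_. euclidean) UNIV) (PiE UNIV S)"
    by (subst compactin_PiE) (auto simp: S_def)
  then have cube: "compact (PiE UNIV S)"
    by (simp add: euclidean_product_topology)
  have coord: "closed {v::int list \<Rightarrow> real. v x = 0}" for x
    by (intro closed_Collect_eq continuous_on_const continuous_on_product_coordinates)
  have inner: "closed {v. l2_inner X p v = c}" "closed {v. l2_inner X v v = c}" for p c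
    by (intro closed_Collect_eq continuous_on_l2_inner continuous_on_const continuous_on_id)+
  have "?K = (\<Inter>x\<in>-X. {v. v x = 0}) \<inter> (\<Inter>i\<in>{..<n}. {v. l2_inner X (u i) v = 0}) \<inter>
      {v. l2_inner X v v = 1}"
    by (auto simp: orth_complement_def)
  then have closed: "closed ?K"
    using coord inner by (simp only:) (intro closed_Int closed_INT ballI; simp)
  have "?K \<subseteq> PiE UNIV S"
  proof safe
    fix v x assume v: "v \<in> orth_complement X u n" "l2_inner X v v = 1"
    show "v x \<in> S x"
    proof (cases "x \<in> X")
      case True
      have "(v x)\<^sup>2 \<le> (\<Sum>y\<in>X. (v y)\<^sup>2)"
        by (rule member_le_sum) (use True assms in auto)
      also have "\<dots> = 1"
        using v by (simp add: l2_inner_def power2_eq_square)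
      finally show ?thesis
        using True by (auto simp: S_def abs_le_iff abs_square_le_1)
    qed (use v in \<open>auto simp: S_def orth_complement_def\<close>)
  qed auto
  then have "?K = PiE UNIV S \<inter> ?K"
    by blast
  then show ?thesis
    using compact_Int_closed[OF cube closed] by simp
qed

definition eigensystem :: "int list set \<Rightarrow> (int list \<Rightarrow> int list \<Rightarrow> real) \<Rightarrow>
    (nat \<Rightarrow> int list \<Rightarrow> real) \<Rightarrow> (nat \<Rightarrow> real) \<Rightarrow> nat \<Rightarrow> bool" where
  "eigensystem X A u lam n \<longleftrightarrow>
     orthonormal_on X u n \<and> (\<forall>i<n. \<forall>x\<in>X. mvec X A (u i) x = lam i * u i x)"

definition complete_on :: "int list set \<Rightarrow> (nat \<Rightarrow> int list \<Rightarrow> real) \<Rightarrow> nat \<Rightarrow> bool" where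
  "complete_on X u n \<longleftrightarrow> (\<forall>v. \<forall>x\<in>X. v x = (\<Sum>i<n. l2_inner X (u i) v * u i x))"

lemma l2_inner_eigenvector_mvec:
  assumes "symmetric_on X A" "eigensystem X A u lam n" "i < n"
  shows "l2_inner X (u i) (mvec X A q) = lam i * l2_inner X (u i) q"
proof -
  have "l2_inner X (u i) (mvec X A q) = l2_inner X (mvec X A (u i)) q"
    by (rule l2_inner_mvec_commute[OF assms(1)])
  also have "\<dots> = l2_inner X (\<lambda>x. lam i * u i x) q"
    using assms(2,3) by (simp add: l2_inner_def eigensystem_def)
  finally show ?thesis
    by (simp add: l2_inner_scale_left)
qed

lemma linear_coeff_eq_0_if_quadratic_nonpos:
  fixes a b :: real
  assumes "\<And>t. t * b + t\<^sup>2 * a \<le> 0"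
  shows "b = 0"
proof (rule ccontr)
  assume "b \<noteq> 0"
  define s where "s = \<bar>a\<bar> + 1"
  have s: "s > 0" "s + a > 0"
    by (auto simp: s_def)
  have "b / s * b + (b / s)\<^sup>2 * a = b\<^sup>2 * (s + a) / s\<^sup>2"
    using s by (simp add: field_simps power2_eq_square)
  also have "\<dots> > 0"
    using s \<open>b \<noteq> 0\<close> by simp
  finally show False
    using assms[of "b / s"] by simp
qed

lemma rayleigh_maximizer_exists:
  assumes "finite X" "r \<in> orth_complement X u n" "l2_inner X r r \<noteq> 0"
  obtains v where "v \<in> orth_complement X u n" "l2_inner X v v = 1"
    "\<And>z. z \<in> orth_complement X u n \<Longrightarrow>
       l2_inner X z (mvec X A z) \<le> l2_inner X v (mvec X A v) * l2_inner X z z"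
proof -
  let ?K = "orth_complement X u n \<inter> {v. l2_inner X v v = 1}"
  let ?f = "\<lambda>v. l2_inner X v (mvec X A v)"
  define normalize where "normalize z = (\<lambda>x. z x / sqrt (l2_inner X z z))" for z
  have normalize_in: "normalize z \<in> ?K"
    if "z \<in> orth_complement X u n" "l2_inner X z z \<noteq> 0" for z
    using that by (simp add: normalize_def orth_complement_divide l2_inner_self_normalized)
  have "continuous_on ?K ?f"
    using continuous_on_l2_inner[OF continuous_on_id continuous_on_mvec]
    by (rule continuous_on_subset) simp
  then obtain v where v: "v \<in> ?K" and vmax: "\<And>y. y \<in> ?K \<Longrightarrow> ?f y \<le> ?f v"
    using continuous_attains_sup[OF compact_orth_complement_sphere[OF assms(1)]]
      normalize_in[OF assms(2,3)] by blast
  have "?f z \<le> ?f v * l2_inner X z z" if z: "z \<in> orth_complement X u n" for z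
  proof (cases "l2_inner X z z = 0")
    case True
    then have "\<forall>x\<in>X. z x = 0"
      using l2_inner_self_eq_0[OF assms(1)] by blast
    then show ?thesis
      using True by (simp add: l2_inner_def)
  next
    case False
    then have pos: "0 < l2_inner X z z"
      using l2_inner_self_nonneg[of X z] by linarith
    have "?f (normalize z) = ?f z / l2_inner X z z"
      using pos by (simp add: normalize_def mvec_divide l2_inner_divide_left l2_inner_divide_right)
    then show ?thesis
      using vmax[OF normalize_in[OF z False]] pos by (simp add: divide_le_eq mult.commute)
  qed
  then show ?thesis
    using v that by blast
qed

lemma rayleigh_maximizer_first_variation:
  assumes sym: "symmetric_on X A"
    and v: "v \<in> orth_complement X u n" "l2_inner X v v = 1"
    and max: "\<And>z. z \<in> orth_complement X u n \<Longrightarrow>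
       l2_inner X z (mvec X A z) \<le> l2_inner X v (mvec X A v) * l2_inner X z z"
    and w: "w \<in> orth_complement X u n"
  shows "l2_inner X w (mvec X A v) = l2_inner X v (mvec X A v) * l2_inner X w v"
proof -
  define \<mu> where "\<mu> = l2_inner X v (mvec X A v)"
  have "t * (2 * (l2_inner X w (mvec X A v) - \<mu> * l2_inner X w v)) +
      t\<^sup>2 * (l2_inner X w (mvec X A w) - \<mu> * l2_inner X w w) \<le> 0" for t
  proof -
    define z where "z = (\<lambda>x. v x + t * w x)"
    have "l2_inner X z (mvec X A z) \<le> \<mu> * l2_inner X z z"
      unfolding \<mu>_def z_def by (intro max orth_complement_add_scaled v w)
    moreover have "l2_inner X v (mvec X A w) = l2_inner X w (mvec X A v)"
      using l2_inner_mvec_commute[OF sym, of v w] l2_inner_commute by metis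
    moreover have "l2_inner X w v = l2_inner X v w"
      by (rule l2_inner_commute)
    ultimately show ?thesis
      using v(2) unfolding z_def \<mu>_def
      by (simp add: mvec_add_scaled l2_inner_add_scaled_left l2_inner_add_scaled_right
            algebra_simps power2_eq_square)
  qed
  then show ?thesis
    using linear_coeff_eq_0_if_quadratic_nonpos unfolding \<mu>_def by fastforce
qed

lemma rayleigh_maximizer_is_eigenvector:
  assumes fin: "finite X" and sym: "symmetric_on X A" and eig: "eigensystem X A u lam n"
    and v: "v \<in> orth_complement X u n" "l2_inner X v v = 1"
    and max: "\<And>z. z \<in> orth_complement X u n \<Longrightarrow>
       l2_inner X z (mvec X A z) \<le> l2_inner X v (mvec X A v) * l2_inner X z z"
  shows "\<forall>x\<in>X. mvec X A v x = l2_inner X v (mvec X A v) * v x"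
proof -
  define \<mu> where "\<mu> = l2_inner X v (mvec X A v)"
  define z where "z x = (if x \<in> X then mvec X A v x - \<mu> * v x else 0)" for x
  have "z \<in> orth_complement X u n"
    using v(1) unfolding orth_complement_def
  proof (intro CollectI conjI allI impI)
    fix i assume i: "i < n"
    have "l2_inner X (u i) z = l2_inner X (u i) (mvec X A v) - \<mu> * l2_inner X (u i) v"
      by (simp add: z_def l2_inner_def algebra_simps sum_subtractf sum_distrib_left)
    then show "l2_inner X (u i) z = 0"
      using v(1) i by (simp add: l2_inner_eigenvector_mvec[OF sym eig i] orth_complement_def)
  qed (simp add: z_def)
  then have "l2_inner X z (mvec X A v) = \<mu> * l2_inner X z v"
    using rayleigh_maximizer_first_variation[OF sym v max] by (simp add: \<mu>_def)
  moreover have "l2_inner X z z = l2_inner X z (mvec X A v) - \<mu> * l2_inner X z v"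
    by (simp add: z_def l2_inner_def algebra_simps sum_subtractf sum_distrib_left sum.distrib)
  ultimately have "\<forall>x\<in>X. z x = 0"
    using l2_inner_self_eq_0[OF fin] by auto
  then show ?thesis
    by (simp add: z_def \<mu>_def)
qed

lemma orth_complement_nonzero_if_incomplete:
  assumes fin: "finite X" and orth: "orthonormal_on X u n" and incomplete: "\<not> complete_on X u n"
  obtains r where "r \<in> orth_complement X u n" "l2_inner X r r \<noteq> 0"
proof -
  obtain v x where x: "x \<in> X" and ne: "v x \<noteq> (\<Sum>i<n. l2_inner X (u i) v * u i x)"
    using incomplete by (auto simp: complete_on_def)
  define r where "r y = (if y \<in> X then v y - (\<Sum>i<n. l2_inner X (u i) v * u i y) else 0)" for y
  have "r \<in> orth_complement X u n"
    unfolding orth_complement_def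
  proof (intro CollectI conjI allI impI)
    fix j assume j: "j < n"
    have "l2_inner X (u j) r = l2_inner X (u j) (\<lambda>y. v y - (\<Sum>i<n. l2_inner X (u i) v * u i y))"
      by (rule l2_inner_cong_right) (simp add: r_def)
    also have "\<dots> = 0"
      by (simp add: l2_inner_diff_right l2_inner_orthonormal_sum[OF orth j])
    finally show "l2_inner X (u j) r = 0" .
  qed (simp add: r_def)
  moreover have "l2_inner X r r \<noteq> 0"
    using l2_inner_self_eq_0[OF fin _ x, of r] ne x by (auto simp: r_def)
  ultimately show ?thesis
    by (rule that)
qed

lemma eigensystem_extend:
  assumes fin: "finite X" and sym: "symmetric_on X A" and eig: "eigensystem X A u lam n"
    and incomplete: "\<not> complete_on X u n"
  obtains w \<mu> where "eigensystem X A (u(n := w)) (lam(n := \<mu>)) (Suc n)"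
proof -
  have orth: "orthonormal_on X u n"
    using eig by (simp add: eigensystem_def)
  obtain r where "r \<in> orth_complement X u n" "l2_inner X r r \<noteq> 0"
    using orth_complement_nonzero_if_incomplete[OF fin orth incomplete] .
  then obtain w where w: "w \<in> orth_complement X u n" "l2_inner X w w = 1"
    and wmax: "\<And>z. z \<in> orth_complement X u n \<Longrightarrow>
       l2_inner X z (mvec X A z) \<le> l2_inner X w (mvec X A w) * l2_inner X z z"
    using rayleigh_maximizer_exists[OF fin] by blast
  have "eigensystem X A (u(n := w)) (lam(n := l2_inner X w (mvec X A w))) (Suc n)"
    unfolding eigensystem_def orthonormal_on_def
  proof (intro conjI allI impI)
    fix i x assume "i < Suc n" "x \<notin> X"
    then show "(u(n := w)) i x = 0"
      using orth w(1) by (cases "i = n") (auto simp: orthonormal_on_def orth_complement_def)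
  next
    fix i j assume "i < Suc n" "j < Suc n"
    moreover have "l2_inner X w (u j) = 0" if "j < n" for j
      using w(1) that l2_inner_commute[of X w "u j"] by (simp add: orth_complement_def)
    ultimately show "l2_inner X ((u(n := w)) i) ((u(n := w)) j) = (if i = j then 1 else 0)"
      using orth w
      by (cases "i = n"; cases "j = n") (auto simp: orthonormal_on_def orth_complement_def)
  next
    fix i assume "i < Suc n"
    then show "\<forall>x\<in>X. mvec X A ((u(n := w)) i) x =
        (lam(n := l2_inner X w (mvec X A w))) i * (u(n := w)) i x"
      using eig rayleigh_maximizer_is_eigenvector[OF fin sym eig w wmax]
      by (cases "i = n") (auto simp: eigensystem_def)
  qed
  then show ?thesis
    by (rule that)
qed

theorem spectral_theorem:
  assumes fin: "finite X" and sym: "symmetric_on X A"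
  obtains u lam n where "eigensystem X A u lam n" "complete_on X u n"
proof -
  define S where "S = {n. \<exists>u lam. eigensystem X A u lam n}"
  have "0 \<in> S"
    by (auto simp: S_def eigensystem_def orthonormal_on_def)
  moreover have "S \<subseteq> {..card X}"
    using orthonormal_on_card_le[OF _ fin] by (auto simp: S_def eigensystem_def)
  then have finS: "finite S"
    using finite_subset by blast
  ultimately obtain u lam where eig: "eigensystem X A u lam (Max S)"
    using Max_in[of S] by (auto simp: S_def)
  have "complete_on X u (Max S)"
  proof (rule ccontr)
    assume "\<not> complete_on X u (Max S)"
    then obtain w \<mu> where "eigensystem X A (u(Max S := w)) (lam(Max S := \<mu>)) (Suc (Max S))"
      using eigensystem_extend[OF fin sym eig] by blast
    then have "Suc (Max S) \<in> S"
      by (auto simp: S_def)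
    then show False
      using Max_ge[OF finS] by fastforce
  qed
  then show ?thesis
    using eig that by blast
qed

section \<open>Functional calculus\<close>

definition spectral_matrix :: "int list set \<Rightarrow> (nat \<Rightarrow> int list \<Rightarrow> real) \<Rightarrow> (nat \<Rightarrow> real) \<Rightarrow>
    nat \<Rightarrow> (real \<Rightarrow> real) \<Rightarrow> int list \<Rightarrow> int list \<Rightarrow> real" where
  "spectral_matrix X u lam n f =
     (\<lambda>x y. if x \<in> X \<and> y \<in> X then \<Sum>i<n. f (lam i) * u i x * u i y else 0)"

lemma symmetric_on_spectral_matrix: "symmetric_on X (spectral_matrix X u lam n f)"
  unfolding symmetric_on_def spectral_matrix_def by (simp add: mult_ac)

lemma mvec_spectral_matrix:
  assumes "x \<in> X"
  shows "mvec X (spectral_matrix X u lam n f) v x = (\<Sum>i<n. f (lam i) * l2_inner X (u i) v * u i x)"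
proof -
  have "mvec X (spectral_matrix X u lam n f) v x = (\<Sum>y\<in>X. \<Sum>i<n. f (lam i) * u i x * (u i y * v y))"
    using assms by (simp add: mvec_def spectral_matrix_def sum_distrib_right mult.assoc)
  also have "\<dots> = (\<Sum>i<n. f (lam i) * l2_inner X (u i) v * u i x)"
    by (subst sum.swap) (simp add: l2_inner_def sum_distrib_left mult_ac)
  finally show ?thesis .
qed

lemma l2_inner_spectral_matrix:
  assumes "orthonormal_on X u n" "j < n"
  shows "l2_inner X (u j) (mvec X (spectral_matrix X u lam n f) v) = f (lam j) * l2_inner X (u j) v"
proof -
  have "l2_inner X (u j) (mvec X (spectral_matrix X u lam n f) v) =
      l2_inner X (u j) (\<lambda>x. \<Sum>i<n. f (lam i) * l2_inner X (u i) v * u i x)"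
    by (rule l2_inner_cong_right) (simp add: mvec_spectral_matrix)
  then show ?thesis
    using l2_inner_orthonormal_sum[OF assms] by simp
qed

lemma parseval:
  assumes "complete_on X u n"
  shows "l2_inner X p q = (\<Sum>i<n. l2_inner X (u i) p * l2_inner X (u i) q)"
proof -
  have "l2_inner X p q = l2_inner X (\<lambda>x. \<Sum>i<n. l2_inner X (u i) p * u i x) q"
    using assms unfolding complete_on_def l2_inner_def by (intro sum.cong refl) auto
  then show ?thesis
    by (simp add: l2_inner_sum_left l2_inner_scale_left)
qed

lemma spectral_matrix_unique:
  assumes fin: "finite X" and complete: "complete_on X u n"
    and B: "\<forall>i<n. \<forall>x\<in>X. mvec X B (u i) x = f (lam i) * u i x"
    and x: "x \<in> X" and y: "y \<in> X"
  shows "B x y = spectral_matrix X u lam n f x y"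
proof -
  define e where "e = (\<lambda>z::int list. if z = y then 1 else 0 :: real)"
  have "B x y = (\<Sum>z\<in>X. B x z * e z)"
    using y fin by (simp add: e_def if_distrib cong: if_cong)
  also have "\<dots> = (\<Sum>z\<in>X. \<Sum>i<n. u i y * (B x z * u i z))"
  proof (intro sum.cong refl)
    fix z assume "z \<in> X"
    then have "e z = (\<Sum>i<n. l2_inner X (u i) e * u i z)"
      using complete by (simp add: complete_on_def)
    moreover have "l2_inner X (u i) e = u i y" for i
      using y fin by (simp add: l2_inner_def e_def if_distrib cong: if_cong)
    ultimately show "B x z * e z = (\<Sum>i<n. u i y * (B x z * u i z))"
      by (simp add: sum_distrib_left mult_ac)
  qed
  also have "\<dots> = (\<Sum>i<n. u i y * mvec X B (u i) x)"
    by (subst sum.swap) (simp add: mvec_def sum_distrib_left)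
  also have "\<dots> = spectral_matrix X u lam n f x y"
    using B x y by (simp add: spectral_matrix_def mult_ac)
  finally show ?thesis .
qed

lemma l2_inner_mvec_eigen_expansion:
  assumes "symmetric_on X A" "eigensystem X A u lam n" "complete_on X u n"
  shows "l2_inner X p (mvec X A q) = (\<Sum>i<n. lam i * l2_inner X (u i) p * l2_inner X (u i) q)"
  using assms by (simp add: parseval[OF assms(3), of p] l2_inner_eigenvector_mvec mult_ac)

lemma mvec_spectral_matrix_eigenvector:
  assumes sym: "symmetric_on X A" and eig: "eigensystem X A u lam n"
    and complete: "complete_on X u n"
    and v: "\<forall>x\<in>X. mvec X A v x = \<mu> * v x" and x: "x \<in> X"
  shows "mvec X (spectral_matrix X u lam n f) v x = f \<mu> * v x"
proof -
  have coeff: "f (lam i) * l2_inner X (u i) v = f \<mu> * l2_inner X (u i) v" if "i < n" for i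
  proof -
    have "lam i * l2_inner X (u i) v = \<mu> * l2_inner X (u i) v"
      using l2_inner_eigenvector_mvec[OF sym eig that, of v] v
      by (simp add: l2_inner_def sum_distrib_left mult.left_commute)
    then show ?thesis
      by (cases "lam i = \<mu>") auto
  qed
  have "mvec X (spectral_matrix X u lam n f) v x = (\<Sum>i<n. f (lam i) * l2_inner X (u i) v * u i x)"
    by (rule mvec_spectral_matrix[OF x])
  also have "\<dots> = (\<Sum>i<n. f \<mu> * l2_inner X (u i) v * u i x)"
    by (intro sum.cong refl) (simp only: coeff lessThan_iff)
  also have "\<dots> = f \<mu> * (\<Sum>i<n. l2_inner X (u i) v * u i x)"
    by (simp add: sum_distrib_left mult.assoc)
  also have "\<dots> = f \<mu> * v x"
    using complete x by (simp add: complete_on_def)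
  finally show ?thesis .
qed

theorem matfun_eq_spectral_matrix:
  assumes fin: "finite X" and sym: "symmetric_on X A"
    and eig: "eigensystem X A u lam n" and complete: "complete_on X u n"
  shows "matfun f X A = spectral_matrix X u lam n f"
  unfolding matfun_def
proof (rule the_equality; (elim conjE)?)
  show "(\<forall>x y. x \<notin> X \<or> y \<notin> X \<longrightarrow> spectral_matrix X u lam n f x y = 0) \<and>
    (\<forall>\<mu> v. vanishes_outside X v \<and> (\<forall>x\<in>X. mvec X A v x = \<mu> * v x) \<longrightarrow>
       (\<forall>x\<in>X. mvec X (spectral_matrix X u lam n f) v x = f \<mu> * v x))"
  proof (intro conjI allI impI ballI; (elim conjE)?)
    fix \<mu> v x assume "\<forall>x\<in>X. mvec X A v x = \<mu> * v x" "x \<in> X"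
    then show "mvec X (spectral_matrix X u lam n f) v x = f \<mu> * v x"
      by (rule mvec_spectral_matrix_eigenvector[OF sym eig complete])
  qed (auto simp: spectral_matrix_def)
next
  fix B
  assume out: "\<forall>x y. x \<notin> X \<or> y \<notin> X \<longrightarrow> B x y = 0"
    and calc: "\<forall>\<mu> v. vanishes_outside X v \<and> (\<forall>x\<in>X. mvec X A v x = \<mu> * v x) \<longrightarrow>
       (\<forall>x\<in>X. mvec X B v x = f \<mu> * v x)"
  have "\<forall>i<n. \<forall>x\<in>X. mvec X B (u i) x = f (lam i) * u i x"
    using eig calc by (simp add: eigensystem_def orthonormal_on_def)
  then have "B x y = spectral_matrix X u lam n f x y" for x y
    using spectral_matrix_unique[OF fin complete] out by (cases "x \<in> X \<and> y \<in> X")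
      (auto simp: spectral_matrix_def)
  then show "B = spectral_matrix X u lam n f"
    by blast
qed

lemma mmul_spectral_matrix:
  assumes orth: "orthonormal_on X u n"
  shows "mmul X (spectral_matrix X u lam n f) (spectral_matrix X u lam n g) =
    spectral_matrix X u lam n (\<lambda>t. f t * g t)"
proof (intro ext)
  fix x y
  show "mmul X (spectral_matrix X u lam n f) (spectral_matrix X u lam n g) x y =
      spectral_matrix X u lam n (\<lambda>t. f t * g t) x y"
  proof (cases "x \<in> X \<and> y \<in> X")
    case True
    have column: "l2_inner X (u i) (\<lambda>z. spectral_matrix X u lam n g z y) = g (lam i) * u i y"
      if "i < n" for i
    proof -
      have "l2_inner X (u i) (\<lambda>z. spectral_matrix X u lam n g z y) =
          l2_inner X (u i) (\<lambda>z. \<Sum>j<n. (g (lam j) * u j y) * u j z)"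
        using True by (intro l2_inner_cong_right) (simp add: spectral_matrix_def mult_ac)
      then show ?thesis
        using l2_inner_orthonormal_sum[OF orth that] by simp
    qed
    have "mmul X (spectral_matrix X u lam n f) (spectral_matrix X u lam n g) x y =
        mvec X (spectral_matrix X u lam n f) (\<lambda>z. spectral_matrix X u lam n g z y) x"
      by (simp add: mmul_def mvec_def)
    also have "\<dots> =
        (\<Sum>i<n. f (lam i) * l2_inner X (u i) (\<lambda>z. spectral_matrix X u lam n g z y) * u i x)"
      using True by (simp only: mvec_spectral_matrix)
    also have "\<dots> = (\<Sum>i<n. f (lam i) * (g (lam i) * u i y) * u i x)"
      by (intro sum.cong refl) (simp only: column lessThan_iff)
    also have "\<dots> = spectral_matrix X u lam n (\<lambda>t. f t * g t) x y"
      using True by (simp add: spectral_matrix_def mult_ac)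
    finally show ?thesis .
  qed (auto simp: mmul_def spectral_matrix_def)
qed

lemma eigensystem_nonneg:
  assumes "eigensystem X A u lam n" "\<And>p. 0 \<le> l2_inner X p (mvec X A p)" "i < n"
  shows "0 \<le> lam i"
proof -
  have "l2_inner X (u i) (mvec X A (u i)) = lam i * l2_inner X (u i) (u i)"
    using assms(1,3) by (simp add: eigensystem_def l2_inner_def sum_distrib_left mult_ac)
  also have "\<dots> = lam i"
    using assms(1,3) by (simp add: eigensystem_def orthonormal_on_def)
  finally show ?thesis
    using assms(2)[of "u i"] by simp
qed

lemma l2_inner_spectral_matrix_sqrt:
  assumes sym: "symmetric_on X A" and eig: "eigensystem X A u lam n"
    and complete: "complete_on X u n" and nonneg: "\<forall>i<n. 0 \<le> lam i"
  defines "S \<equiv> spectral_matrix X u lam n sqrt"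
  shows "l2_inner X (mvec X S p) (mvec X S q) = l2_inner X p (mvec X A q)"
proof -
  have orth: "orthonormal_on X u n"
    using eig by (simp add: eigensystem_def)
  have "l2_inner X (mvec X S p) (mvec X S q) =
      (\<Sum>i<n. l2_inner X (u i) (mvec X S p) * l2_inner X (u i) (mvec X S q))"
    by (rule parseval[OF complete])
  also have "\<dots> = (\<Sum>i<n. lam i * l2_inner X (u i) p * l2_inner X (u i) q)"
    using nonneg
    by (intro sum.cong refl) (simp add: S_def l2_inner_spectral_matrix[OF orth] real_sqrt_mult_self)
  also have "\<dots> = l2_inner X p (mvec X A q)"
    by (rule l2_inner_mvec_eigen_expansion[OF sym eig complete, symmetric])
  finally show ?thesis .
qed

lemma quadratic_form_spectral_matrix_le:
  assumes sym: "symmetric_on X A" and eig: "eigensystem X A u lam n"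
    and complete: "complete_on X u n" and g: "\<forall>i<n. lam i * (g (lam i))\<^sup>2 \<le> 1"
  defines "G \<equiv> spectral_matrix X u lam n g"
  shows "l2_inner X (mvec X G p) (mvec X A (mvec X G p)) \<le> l2_inner X p p"
proof -
  have orth: "orthonormal_on X u n"
    using eig by (simp add: eigensystem_def)
  have "l2_inner X (mvec X G p) (mvec X A (mvec X G p)) =
      (\<Sum>i<n. (lam i * (g (lam i))\<^sup>2) * (l2_inner X (u i) p)\<^sup>2)"
    by (simp add: l2_inner_mvec_eigen_expansion[OF sym eig complete] G_def
        l2_inner_spectral_matrix[OF orth] power2_eq_square mult_ac)
  also have "\<dots> \<le> (\<Sum>i<n. 1 * (l2_inner X (u i) p)\<^sup>2)"
    using g by (intro sum_mono mult_right_mono) simp_all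
  also have "\<dots> = l2_inner X p p"
    by (simp add: parseval[OF complete, of p] power2_eq_square)
  finally show ?thesis .
qed

lemma matfun_eq_0_outside:
  assumes "finite X" "symmetric_on X A" "x \<notin> X \<or> y \<notin> X"
  shows "matfun f X A x y = 0"
proof -
  obtain u lam n where "eigensystem X A u lam n" "complete_on X u n"
    using spectral_theorem[OF assms(1,2)] .
  then show ?thesis
    using assms by (auto simp: matfun_eq_spectral_matrix spectral_matrix_def)
qed

lemma symmetric_on_matfun:
  assumes "finite X" "symmetric_on X A"
  shows "symmetric_on X (matfun f X A)"
proof -
  obtain u lam n where "eigensystem X A u lam n" "complete_on X u n"
    using spectral_theorem[OF assms] .
  then show ?thesis
    using assms by (simp add: matfun_eq_spectral_matrix symmetric_on_spectral_matrix)
qed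

lemma mmul_matfun:
  assumes "finite X" "symmetric_on X A"
  shows "mmul X (matfun f X A) (matfun g X A) = matfun (\<lambda>t. f t * g t) X A"
proof -
  obtain u lam n where "eigensystem X A u lam n" "complete_on X u n"
    using spectral_theorem[OF assms] .
  then show ?thesis
    using assms by (simp add: matfun_eq_spectral_matrix mmul_spectral_matrix eigensystem_def)
qed

lemma l2_inner_matfun_sqrt:
  assumes "finite X" "symmetric_on X A" and psd: "\<And>p. 0 \<le> l2_inner X p (mvec X A p)"
  shows "l2_inner X (mvec X (matfun sqrt X A) p) (mvec X (matfun sqrt X A) q) =
    l2_inner X p (mvec X A q)"
proof -
  obtain u lam n where eig: "eigensystem X A u lam n" and complete: "complete_on X u n"
    using spectral_theorem[OF assms(1,2)] .
  moreover have "\<forall>i<n. 0 \<le> lam i"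
    using eigensystem_nonneg[OF eig psd] by blast
  ultimately show ?thesis
    using assms by (simp add: matfun_eq_spectral_matrix l2_inner_spectral_matrix_sqrt)
qed

lemma quadratic_form_matfun_le:
  assumes "finite X" "symmetric_on X A" and g: "\<And>t. t * (g t)\<^sup>2 \<le> 1"
  shows "l2_inner X (mvec X (matfun g X A) p) (mvec X A (mvec X (matfun g X A) p)) \<le> l2_inner X p p"
proof -
  obtain u lam n where eig: "eigensystem X A u lam n" and complete: "complete_on X u n"
    using spectral_theorem[OF assms(1,2)] .
  then show ?thesis
    using assms quadratic_form_spectral_matrix_le[OF assms(2) eig complete, of g]
    by (simp add: matfun_eq_spectral_matrix)
qed

section \<open>Quadratic forms with a sparse block structure\<close>

lemma sum_adjacent_products_le:
  fixes a :: "'i \<Rightarrow> real"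
  assumes fin: "finite I" and sym: "\<And>i j. i \<in> I \<Longrightarrow> j \<in> I \<Longrightarrow> R i j \<Longrightarrow> R j i"
    and deg: "\<And>i. i \<in> I \<Longrightarrow> card {j\<in>I. R i j} \<le> D"
  shows "(\<Sum>i\<in>I. \<Sum>j\<in>I. if R i j then a i * a j else 0) \<le> D * (\<Sum>i\<in>I. (a i)\<^sup>2)"
proof -
  define Q where "Q = (\<Sum>i\<in>I. \<Sum>j\<in>I. if R i j then (a i)\<^sup>2 else 0)"
  have "Q = (\<Sum>i\<in>I. (a i)\<^sup>2 * card {j\<in>I. R i j})"
    unfolding Q_def using fin by (intro sum.cong refl) (simp add: sum.If_cases Int_def conj_commute)
  also have "\<dots> \<le> (\<Sum>i\<in>I. (a i)\<^sup>2 * D)"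
    by (intro sum_mono mult_left_mono) (simp_all add: deg)
  finally have Q_le: "Q \<le> D * (\<Sum>i\<in>I. (a i)\<^sup>2)"
    by (simp add: sum_distrib_left mult.commute)
  have "(\<Sum>i\<in>I. \<Sum>j\<in>I. if R i j then (a j)\<^sup>2 else 0) = (\<Sum>j\<in>I. \<Sum>i\<in>I. if R i j then (a j)\<^sup>2 else 0)"
    by (rule sum.swap)
  also have "\<dots> = Q"
    unfolding Q_def using sym by (intro sum.cong refl) auto
  finally have Q_swap: "(\<Sum>i\<in>I. \<Sum>j\<in>I. if R i j then (a j)\<^sup>2 else 0) = Q" .
  have "(\<Sum>i\<in>I. \<Sum>j\<in>I. if R i j then a i * a j else 0) \<le>
      (\<Sum>i\<in>I. \<Sum>j\<in>I. (if R i j then (a i)\<^sup>2 else 0) / 2 + (if R i j then (a j)\<^sup>2 else 0) / 2)"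
  proof (intro sum_mono)
    fix i j
    have "a i * a j \<le> (a i)\<^sup>2 / 2 + (a j)\<^sup>2 / 2"
      using sum_squares_bound[of "a i" "a j"] by (simp add: power2_eq_square)
    then show "(if R i j then a i * a j else 0) \<le>
        (if R i j then (a i)\<^sup>2 else 0) / 2 + (if R i j then (a j)\<^sup>2 else 0) / 2"
      by simp
  qed
  also have "\<dots> = Q / 2 + (\<Sum>i\<in>I. \<Sum>j\<in>I. if R i j then (a j)\<^sup>2 else 0) / 2"
    by (simp add: sum.distrib Q_def flip: sum_divide_distrib)
  also have "\<dots> = Q"
    using Q_swap by simp
  finally show ?thesis
    using Q_le by linarith
qed

lemma quadratic_form_sum_blocks:
  fixes B :: "'i \<Rightarrow> int list set"
  assumes finI: "finite I"
    and disj: "\<And>m m'. m \<in> I \<Longrightarrow> m' \<in> I \<Longrightarrow> m \<noteq> m' \<Longrightarrow> B m \<inter> B m' = {}"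
    and cover: "(\<Union>m\<in>I. B m) = L"
  shows "l2_inner L w (mvec L H w) = (\<Sum>m\<in>I. \<Sum>m'\<in>I.
     l2_inner L (\<lambda>x. if x \<in> B m then w x else 0) (mvec L H (\<lambda>x. if x \<in> B m' then w x else 0)))"
proof -
  define wb where "wb m x = (if x \<in> B m then w x else 0)" for m x
  have split: "w x = (\<Sum>m\<in>I. wb m x)" if x: "x \<in> L" for x
  proof -
    obtain m0 where m0: "m0 \<in> I" "x \<in> B m0"
      using cover x by blast
    have "(\<Sum>m\<in>I. wb m x) = (\<Sum>m\<in>I. if m = m0 then w x else 0)"
      using disj m0 by (intro sum.cong refl) (auto simp: wb_def)
    then show ?thesis
      using m0 finI by simp
  qed
  have "l2_inner L w (mvec L H w) =
      l2_inner L (\<lambda>x. \<Sum>m\<in>I. wb m x) (mvec L H (\<lambda>x. \<Sum>m\<in>I. wb m x))"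
    using split mvec_cong[of L w "\<lambda>x. \<Sum>m\<in>I. wb m x" H] by (simp add: l2_inner_def)
  then show ?thesis
    by (simp add: mvec_sum l2_inner_sum_left l2_inner_sum_right wb_def[abs_def])
qed

lemma quadratic_form_le_blocks:
  fixes B :: "'i \<Rightarrow> int list set" and R :: "'i \<Rightarrow> 'i \<Rightarrow> bool"
  assumes finI: "finite I"
    and disj: "\<And>m m'. m \<in> I \<Longrightarrow> m' \<in> I \<Longrightarrow> m \<noteq> m' \<Longrightarrow> B m \<inter> B m' = {}"
    and cover: "(\<Union>m\<in>I. B m) = L"
    and gram: "\<And>p q. l2_inner L p (mvec L H q) = l2_inner L (mvec L S p) (mvec L S q)"
    and sparse: "\<And>m m' x y. m \<in> I \<Longrightarrow> m' \<in> I \<Longrightarrow> m \<noteq> m' \<Longrightarrow> \<not> R m m' \<Longrightarrow>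
       x \<in> B m \<Longrightarrow> y \<in> B m' \<Longrightarrow> H x y = 0"
    and symR: "\<And>m m'. m \<in> I \<Longrightarrow> m' \<in> I \<Longrightarrow> R m m' \<Longrightarrow> R m' m"
    and deg: "\<And>m. m \<in> I \<Longrightarrow> card {m'\<in>I. m' \<noteq> m \<and> R m m'} \<le> D"
  shows "l2_inner L w (mvec L H w) \<le>
    (real D + 1) * (\<Sum>m\<in>I. l2_inner L (\<lambda>x. if x \<in> B m then w x else 0)
                                  (mvec L H (\<lambda>x. if x \<in> B m then w x else 0)))"
proof -
  define wb where "wb m x = (if x \<in> B m then w x else 0)" for m x
  define E where "E m m' = l2_inner L (wb m) (mvec L H (wb m'))" for m m'
  define a where "a m = sqrt (E m m)" for m
  have total: "l2_inner L w (mvec L H w) = (\<Sum>m\<in>I. \<Sum>m'\<in>I. E m m')"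
    unfolding E_def wb_def[abs_def] by (rule quadratic_form_sum_blocks[OF finI disj cover])
  have E_le: "E m m' \<le> a m * a m'" for m m'
    unfolding E_def a_def gram by (rule l2_inner_le_sqrt)
  have E_diag: "(a m)\<^sup>2 = E m m" for m
    unfolding a_def E_def gram by (simp add: l2_inner_self_nonneg)
  have E_0: "E m m' = 0" if "m \<in> I" "m' \<in> I" "m \<noteq> m'" "\<not> R m m'" for m m'
    unfolding E_def l2_inner_def mvec_def wb_def
    by (intro sum.neutral ballI) (auto simp: sparse[OF that] intro!: sum.neutral)
  have "(\<Sum>m\<in>I. \<Sum>m'\<in>I. E m m') =
      (\<Sum>m\<in>I. \<Sum>m'\<in>I. (if m' = m then E m m' else 0) + (if m' \<noteq> m \<and> R m m' then E m m' else 0))"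
    using E_0 by (intro sum.cong refl) auto
  also have "\<dots> = (\<Sum>m\<in>I. (a m)\<^sup>2) + (\<Sum>m\<in>I. \<Sum>m'\<in>I. if m' \<noteq> m \<and> R m m' then E m m' else 0)"
    using finI by (simp add: sum.distrib E_diag)
  also have "\<dots> \<le> (\<Sum>m\<in>I. (a m)\<^sup>2) + (\<Sum>m\<in>I. \<Sum>m'\<in>I. if m' \<noteq> m \<and> R m m' then a m * a m' else 0)"
    using E_le by (intro add_left_mono sum_mono) auto
  also have "\<dots> \<le> (\<Sum>m\<in>I. (a m)\<^sup>2) + D * (\<Sum>m\<in>I. (a m)\<^sup>2)"
    by (intro add_left_mono sum_adjacent_products_le[OF finI]) (use symR deg in auto)
  finally show ?thesis
    by (simp add: total E_diag E_def wb_def[abs_def] algebra_simps)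
qed

section \<open>The Anderson Hamiltonian and the dual graph\<close>

lemma l1dist_commute: "length x = length y \<Longrightarrow> l1dist x y = l1dist y x"
  unfolding l1dist_def by (simp add: abs_minus_commute)

lemma l1dist_self [simp]: "l1dist x x = 0"
  by (simp add: l1dist_def)

lemma l1dist_eq_0_iff: "length x = length y \<Longrightarrow> l1dist x y = 0 \<longleftrightarrow> x = y"
  unfolding l1dist_def by (auto intro: nth_equalityI)

lemma l1dist_eq_1_imp_unit_step:
  assumes len: "length x = d" "length y = d" and dist: "l1dist x y = 1"
  obtains i s where "i < d" "s \<in> {1, -1}" "y = x[i := x ! i + s]"
proof -
  define t where "t i = nat \<bar>x ! i - y ! i\<bar>" for i
  have sum_t: "(\<Sum>i<d. t i) = 1"
    using dist len by (simp add: l1dist_def t_def)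
  then obtain i where i: "i < d" "t i \<noteq> 0"
    by (metis (mono_tags, lifting) lessThan_iff sum.neutral zero_neq_one)
  have "(\<Sum>i<d. t i) = t i + (\<Sum>j\<in>{..<d} - {i}. t j)"
    using i by (simp add: sum.remove)
  then have "t i = 1" and rest: "(\<Sum>j\<in>{..<d} - {i}. t j) = 0"
    using sum_t i by linarith+
  then obtain s where s: "s \<in> {1, -1}" "y ! i = x ! i + s"
    by (auto simp: t_def abs_if split: if_splits)
  have "y ! j = x ! j" if "j < d" "j \<noteq> i" for j
    using rest that by (simp add: t_def)
  then have "y = x[i := x ! i + s]"
    using len i s by (intro nth_equalityI) (auto simp: nth_list_update)
  then show ?thesis
    using that i s by blast
qed

lemma card_l1_unit_sphere_le:
  assumes "length x = d" "\<forall>y\<in>X. length y = d"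
  shows "card {y\<in>X. l1dist x y = 1} \<le> 2 * d"
proof -
  have "{y\<in>X. l1dist x y = 1} \<subseteq> (\<lambda>(i, s). x[i := x ! i + s]) ` ({..<d} \<times> {1, -1::int})"
  proof
    fix y assume "y \<in> {y\<in>X. l1dist x y = 1}"
    then obtain i s where "i < d" "s \<in> {1, -1}" "y = x[i := x ! i + s]"
      using l1dist_eq_1_imp_unit_step[OF assms(1)] assms(2) by blast
    then show "y \<in> (\<lambda>(i, s). x[i := x ! i + s]) ` ({..<d} \<times> {1, -1})"
      by force
  qed
  then have "card {y\<in>X. l1dist x y = 1} \<le>
      card ((\<lambda>(i, s). x[i := x ! i + s]) ` ({..<d} \<times> {1, -1::int}))"
    by (intro card_mono) simp_all
  also have "\<dots> \<le> card ({..<d} \<times> {1, -1::int})"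
    by (rule card_image_le) simp
  finally show ?thesis
    by (simp add: card_cartesian_product)
qed

lemma symmetric_on_hmat: "\<forall>x\<in>X. length x = d \<Longrightarrow> symmetric_on X (hmat d k X)"
  unfolding symmetric_on_def hmat_def using l1dist_commute by auto

lemma hmat_quadratic_form:
  assumes "finite X"
  shows "l2_inner X w (mvec X (hmat d k X) w) =
    (\<Sum>x\<in>X. (2 * real d + k x) * (w x)\<^sup>2) - (\<Sum>x\<in>X. \<Sum>y\<in>X. if l1dist x y = 1 then w x * w y else 0)"
proof -
  have "l2_inner X w (mvec X (hmat d k X) w) =
      (\<Sum>x\<in>X. \<Sum>y\<in>X. (if x = y then (2 * real d + k x) * (w x)\<^sup>2 else 0)
        - (if l1dist x y = 1 then w x * w y else 0))"
    unfolding l2_inner_def mvec_def sum_distrib_left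
    by (intro sum.cong refl) (auto simp: hmat_def power2_eq_square)
  then show ?thesis
    using assms by (simp add: sum_subtractf)
qed

lemma hmat_quadratic_form_nonneg:
  assumes fin: "finite X" and len: "\<forall>x\<in>X. length x = d" and k: "\<forall>x\<in>X. 0 \<le> k x"
  shows "0 \<le> l2_inner X w (mvec X (hmat d k X) w)"
proof -
  have "(\<Sum>x\<in>X. \<Sum>y\<in>X. if l1dist x y = 1 then w x * w y else 0) \<le> real (2 * d) * (\<Sum>x\<in>X. (w x)\<^sup>2)"
    using len l1dist_commute card_l1_unit_sphere_le by (intro sum_adjacent_products_le[OF fin]) auto
  also have "\<dots> \<le> (\<Sum>x\<in>X. (2 * real d + k x) * (w x)\<^sup>2)"
    using k by (simp add: sum_distrib_left) (intro sum_mono mult_right_mono, auto)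
  finally show ?thesis
    by (simp add: hmat_quadratic_form[OF fin])
qed

lemma dual_adj_if_l1dist_eq_1:
  assumes fin: "finite A" "finite B" and disj: "A \<inter> B = {}"
    and len: "\<forall>x\<in>A \<union> B. length x = d"
    and xy: "x \<in> A" "y \<in> B" "l1dist x y = 1"
  shows "dual_adj A B"
proof -
  define S where "S = {l1dist x y | x y. x \<in> A \<and> y \<in> B}"
  have "S = (\<lambda>(x, y). l1dist x y) ` (A \<times> B)"
    by (auto simp: S_def)
  then have finS: "finite S"
    using fin by simp
  have "1 \<in> S"
    using xy unfolding S_def by force
  then have "Min S \<le> 1" and "Min S \<in> S"
    using finS Min_in by auto
  moreover have "0 \<notin> S"
    using disj len l1dist_eq_0_iff by (fastforce simp: S_def)
  ultimately have "Min S = 1"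
    by (metis le_neq_implies_less less_one)
  then show ?thesis
    by (simp add: dual_adj_def S_def)
qed

lemma dual_adj_commute:
  assumes "\<forall>x\<in>A \<union> B. length x = d"
  shows "dual_adj A B \<longleftrightarrow> dual_adj B A"
proof -
  have swap: "{l1dist x y | x y. x \<in> P \<and> y \<in> Q} \<subseteq> {l1dist x y | x y. x \<in> Q \<and> y \<in> P}"
    if "\<forall>x\<in>P \<union> Q. length x = d" for P Q
  proof
    fix n assume "n \<in> {l1dist x y | x y. x \<in> P \<and> y \<in> Q}"
    then obtain x y where xy: "n = l1dist x y" "x \<in> P" "y \<in> Q"
      by blast
    then have "n = l1dist y x"
      using that by (simp add: l1dist_commute)
    then show "n \<in> {l1dist x y | x y. x \<in> Q \<and> y \<in> P}"
      using xy by blast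
  qed
  have "{l1dist x y | x y. x \<in> A \<and> y \<in> B} = {l1dist x y | x y. x \<in> B \<and> y \<in> A}"
    using swap[of A B] swap[of B A] assms by (simp add: Un_commute)
  then show ?thesis
    by (simp add: dual_adj_def)
qed

section \<open>The norm bound\<close>

definition Dminus_symbol :: "ereal \<Rightarrow> real \<Rightarrow> real" where
  "Dminus_symbol b t = 1 / sqrt t * tanh_ext b (sqrt t)"

lemma tanh_ext_square_le_1: "(tanh_ext b s)\<^sup>2 \<le> 1"
proof -
  have "\<bar>tanh t\<bar> \<le> 1" for t :: real
    using tanh_real_lt_1[of t] tanh_real_gt_neg1[of t] by linarith
  then show ?thesis
    by (simp add: tanh_ext_def abs_square_le_1)
qed

lemma Dminus_symbol_bound: "t * (Dminus_symbol b t)\<^sup>2 \<le> 1"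
proof (cases "t > 0")
  case True
  then have "t * (Dminus_symbol b t)\<^sup>2 = (tanh_ext b (sqrt t))\<^sup>2"
    by (simp add: Dminus_symbol_def power_mult_distrib power_divide)
  then show ?thesis
    using tanh_ext_square_le_1 by simp
next
  case False
  then have "t * (Dminus_symbol b t)\<^sup>2 \<le> 0"
    by (intro mult_nonpos_nonneg) auto
  then show ?thesis
    by simp
qed

context
  fixes d M :: nat and L :: "int list set" and Lam :: "nat \<Rightarrow> int list set"
  assumes finite_L: "finite L" and length_L: "\<forall>x\<in>L. length x = d"
    and disjoint_blocks: "\<forall>m\<in>{1..M}. \<forall>m'\<in>{1..M}. m \<noteq> m' \<longrightarrow> Lam m \<inter> Lam m' = {}"
    and blocks_cover: "(\<Union>m\<in>{1..M}. Lam m) = L"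
begin

lemma block_subset: "m \<in> {1..M} \<Longrightarrow> Lam m \<subseteq> L"
  using blocks_cover by blast

lemma finite_block: "m \<in> {1..M} \<Longrightarrow> finite (Lam m)"
  using block_subset finite_L finite_subset by blast

lemma symmetric_on_hmat_block: "m \<in> {1..M} \<Longrightarrow> symmetric_on (Lam m) (hmat d k (Lam m))"
  using block_subset length_L by (intro symmetric_on_hmat) blast

lemma length_blocks:
  "m \<in> {1..M} \<Longrightarrow> m' \<in> {1..M} \<Longrightarrow> \<forall>x\<in>Lam m \<union> Lam m'. length x = d"
  using block_subset length_L by blast

lemma hmat_eq_0_if_not_dual_adj:
  assumes "m \<in> {1..M}" "m' \<in> {1..M}" "m \<noteq> m'" "\<not> dual_adj (Lam m) (Lam m')"
    and "x \<in> Lam m" "y \<in> Lam m'"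
  shows "hmat d k L x y = 0"
proof -
  have "x \<noteq> y"
    using disjoint_blocks assms by blast
  moreover have "l1dist x y \<noteq> 1"
    using dual_adj_if_l1dist_eq_1[OF finite_block finite_block] disjoint_blocks length_blocks assms
    by blast
  ultimately show ?thesis
    by (simp add: hmat_def)
qed

lemma quadratic_form_hmat_le_blocks:
  assumes k: "\<forall>x\<in>L. 0 \<le> k x"
  shows "l2_inner L w (mvec L (hmat d k L) w) \<le> (real (max_degree M Lam) + 1) *
    (\<Sum>m\<in>{1..M}. l2_inner (Lam m) w (mvec (Lam m) (hmat d k (Lam m)) w))"
proof -
  let ?H = "hmat d k L"
  let ?S = "matfun sqrt L ?H"
  have gram: "l2_inner L p (mvec L ?H q) = l2_inner L (mvec L ?S p) (mvec L ?S q)" for p q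
    using l2_inner_matfun_sqrt[OF finite_L symmetric_on_hmat[OF length_L]
        hmat_quadratic_form_nonneg[OF finite_L length_L k]] by simp
  have deg: "card {m'\<in>{1..M}. m' \<noteq> m \<and> dual_adj (Lam m) (Lam m')} \<le> max_degree M Lam"
    if "m \<in> {1..M}" for m
    unfolding max_degree_def using that by (intro Max_ge) auto
  have "l2_inner L w (mvec L ?H w) \<le> (real (max_degree M Lam) + 1) *
      (\<Sum>m\<in>{1..M}. l2_inner L (\<lambda>x. if x \<in> Lam m then w x else 0)
                               (mvec L ?H (\<lambda>x. if x \<in> Lam m then w x else 0)))"
  proof (rule quadratic_form_le_blocks[OF finite_atLeastAtMost _ blocks_cover gram
        hmat_eq_0_if_not_dual_adj _ deg])
    fix m m' assume "m \<in> {1..M}" "m' \<in> {1..M}"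
    then show "m \<noteq> m' \<Longrightarrow> Lam m \<inter> Lam m' = {}"
      and "dual_adj (Lam m) (Lam m') \<Longrightarrow> dual_adj (Lam m') (Lam m)"
      using disjoint_blocks dual_adj_commute[OF length_blocks] by auto
  qed
  also have "\<dots> = (real (max_degree M Lam) + 1) *
      (\<Sum>m\<in>{1..M}. l2_inner (Lam m) w (mvec (Lam m) (hmat d k (Lam m)) w))"
    using block_subset
    by (intro arg_cong[where f = "(*) _"] sum.cong refl l2_inner_mvec_restrict[OF finite_L])
      (auto simp: hmat_def)
  finally show ?thesis .
qed

lemma Dminus_eq_sum_matfun:
  "Dminus d k M Lam \<beta> x y =
    (\<Sum>m\<in>{1..M}. matfun (Dminus_symbol (\<beta> m)) (Lam m) (hmat d k (Lam m)) x y)"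
  unfolding Dminus_def Dminus_symbol_def[abs_def]
  by (intro sum.cong refl) (simp add: mmul_matfun[OF finite_block symmetric_on_hmat_block])

lemma symmetric_on_Dminus: "symmetric_on L (Dminus d k M Lam \<beta>)"
proof -
  have "matfun f (Lam m) (hmat d k (Lam m)) x y = matfun f (Lam m) (hmat d k (Lam m)) y x"
    if "m \<in> {1..M}" for f m x y
    using symmetric_on_matfun[OF finite_block symmetric_on_hmat_block, OF that that]
      matfun_eq_0_outside[OF finite_block symmetric_on_hmat_block, OF that that]
    by (cases "x \<in> Lam m \<and> y \<in> Lam m") (auto simp: symmetric_on_def)
  then show ?thesis
    by (simp add: symmetric_on_def Dminus_eq_sum_matfun)
qed

lemma mvec_Dminus_block:
  assumes m: "m \<in> {1..M}" and x: "x \<in> Lam m"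
  shows "mvec L (Dminus d k M Lam \<beta>) p x =
    mvec (Lam m) (matfun (Dminus_symbol (\<beta> m)) (Lam m) (hmat d k (Lam m))) p x"
proof -
  let ?D = "\<lambda>m. matfun (Dminus_symbol (\<beta> m)) (Lam m) (hmat d k (Lam m))"
  have out: "?D m' x' y = 0" if "m' \<in> {1..M}" "x' \<notin> Lam m' \<or> y \<notin> Lam m'" for m' x' y
    using matfun_eq_0_outside[OF finite_block symmetric_on_hmat_block] that by blast
  have "Dminus d k M Lam \<beta> x y = ?D m x y" for y
  proof -
    have "?D m' x y = 0" if "m' \<in> {1..M} - {m}" for m'
      using out disjoint_blocks m x that by blast
    then show ?thesis
      unfolding Dminus_eq_sum_matfun using m by (simp add: sum.remove)
  qed
  then have "mvec L (Dminus d k M Lam \<beta>) p x = (\<Sum>y\<in>L. ?D m x y * p y)"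
    by (simp add: mvec_def)
  also have "\<dots> = mvec (Lam m) (?D m) p x"
    unfolding mvec_def using out[OF m]
    by (intro sum.mono_neutral_right finite_L block_subset m) auto
  finally show ?thesis .
qed

lemma quadratic_form_hmat_block_Dminus_le:
  fixes k :: "int list \<Rightarrow> real" and \<beta> :: "nat \<Rightarrow> ereal" and p :: "int list \<Rightarrow> real"
  assumes m: "m \<in> {1..M}"
  defines "w \<equiv> mvec L (Dminus d k M Lam \<beta>) p"
  shows "l2_inner (Lam m) w (mvec (Lam m) (hmat d k (Lam m)) w) \<le> l2_inner (Lam m) p p"
proof -
  let ?D = "matfun (Dminus_symbol (\<beta> m)) (Lam m) (hmat d k (Lam m))"
  have "l2_inner (Lam m) w (mvec (Lam m) (hmat d k (Lam m)) w) =
      l2_inner (Lam m) (mvec (Lam m) ?D p) (mvec (Lam m) (hmat d k (Lam m)) (mvec (Lam m) ?D p))"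
    using mvec_cong[of "Lam m" w "mvec (Lam m) ?D p"] mvec_Dminus_block[OF m]
    by (simp add: w_def l2_inner_def)
  also have "\<dots> \<le> l2_inner (Lam m) p p"
    by (rule quadratic_form_matfun_le[OF finite_block[OF m] symmetric_on_hmat_block[OF m]
          Dminus_symbol_bound])
  finally show ?thesis .
qed

theorem opnorm_Dminus_sqrt_hmat_le:
  assumes k: "\<forall>x\<in>L. 0 \<le> k x"
  shows "opnorm L (mmul L (Dminus d k M Lam \<beta>) (matfun sqrt L (hmat d k L)))
    \<le> sqrt (real (max_degree M Lam) + 1)"
proof -
  define c where "c = real (max_degree M Lam) + 1"
  define H where "H = hmat d k L"
  define S where "S = matfun sqrt L H"
  define D where "D = Dminus d k M Lam \<beta>"
  have symH: "symmetric_on L H"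
    unfolding H_def using symmetric_on_hmat length_L .
  have "l2_inner L (mvec L S (mvec L D p)) (mvec L S (mvec L D p)) \<le> c * l2_inner L p p" for p
  proof -
    have "l2_inner L (mvec L S (mvec L D p)) (mvec L S (mvec L D p)) =
        l2_inner L (mvec L D p) (mvec L H (mvec L D p))"
      unfolding S_def H_def
      by (rule l2_inner_matfun_sqrt[OF finite_L symmetric_on_hmat[OF length_L]
            hmat_quadratic_form_nonneg[OF finite_L length_L k]])
    also have "\<dots> \<le> c * (\<Sum>m\<in>{1..M}. l2_inner (Lam m) (mvec L D p)
                                         (mvec (Lam m) (hmat d k (Lam m)) (mvec L D p)))"
      unfolding c_def H_def by (rule quadratic_form_hmat_le_blocks[OF k])
    also have "\<dots> \<le> c * (\<Sum>m\<in>{1..M}. l2_inner (Lam m) p p)"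
      unfolding c_def D_def
      by (intro mult_left_mono sum_mono quadratic_form_hmat_block_Dminus_le) auto
    also have "(\<Sum>m\<in>{1..M}. l2_inner (Lam m) p p) = l2_inner L p p"
      unfolding l2_inner_def blocks_cover[symmetric]
      by (rule sum.UNION_disjoint[symmetric]) (use finite_block disjoint_blocks in auto)
    finally show ?thesis .
  qed
  then have "l2_inner L (mvec L D (mvec L S v)) (mvec L D (mvec L S v)) \<le> c * l2_inner L v v"
    for v
    using l2_bound_transpose[OF symmetric_on_matfun[OF finite_L symH]] symmetric_on_Dminus
    by (simp add: c_def S_def D_def)
  then show ?thesis
    by (intro opnorm_le_sqrt) (simp_all add: c_def D_def S_def H_def mvec_mmul)
qed

end

lemma finite_box: "finite (box d a b)"
proof (rule finite_subset)
  show "box d a b \<subseteq> {xs. set xs \<subseteq> (\<Union>i<d. {a i..b i}) \<and> length xs = d}"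
    by (fastforce simp: box_def in_set_conv_nth)
  show "finite {xs. set xs \<subseteq> (\<Union>i<d. {a i..b i}) \<and> length xs = d}"
    by (intro finite_lists_length_eq) auto
qed

lemma AE_nonneg_if_density_vanishes_on_negatives:
  fixes X :: "'a \<Rightarrow> real"
  assumes dist: "distributed M lborel X (\<lambda>t. ennreal (f t))" and f: "\<And>t. t < 0 \<Longrightarrow> f t = 0"
  shows "AE \<omega> in M. 0 \<le> X \<omega>"
proof (rule AE_distrD[OF distributed_measurable[OF dist]])
  have "0 \<le> t" if "0 < ennreal (f t)" for t
  proof (rule ccontr)
    assume "\<not> 0 \<le> t"
    then show False
      using that f[of t] by simp
  qed
  then have "AE t in lborel. 0 < ennreal (f t) \<longrightarrow> 0 \<le> t"
    by simp
  then have "AE t in density lborel (\<lambda>t. ennreal (f t)). 0 \<le> t"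
    by (subst AE_density[OF distributed_borel_measurable[OF dist]])
  then show "AE t in distr M lborel X. 0 \<le> t"
    by (simp only: distributed_distr_eq_density[OF dist])
qed

theorem lemma4p1:
  fixes P :: "'w measure" and k :: "'w \<Rightarrow> int list \<Rightarrow> real"
    and \<nu> :: "real \<Rightarrow> real" and kmax :: real
    and d L M :: nat and Lam :: "nat \<Rightarrow> int list set" and \<beta> :: "nat \<Rightarrow> ereal"
  assumes "prob_space P"
    and "d \<ge> 1"
    and "0 < kmax"
    and "\<nu> \<in> borel_measurable borel" and "\<forall>t. 0 \<le> \<nu> t" and "\<exists>C. \<forall>t. \<nu> t \<le> C"
    and "closure {t. \<nu> t \<noteq> 0} = {0..kmax}"
    and "\<forall>x\<in>box d (\<lambda>_. - int L) (\<lambda>_. int L).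
           distributed P lborel (\<lambda>\<omega>. k \<omega> x) (\<lambda>t. ennreal (\<nu> t))"
    and "prob_space.indep_vars P (\<lambda>_. borel) (\<lambda>x \<omega>. k \<omega> x) (box d (\<lambda>_. - int L) (\<lambda>_. int L))"
    and "\<forall>m\<in>{1..M}. is_box d (Lam m)"
    and "\<forall>m\<in>{1..M}. \<forall>m'\<in>{1..M}. m \<noteq> m' \<longrightarrow> Lam m \<inter> Lam m' = {}"
    and "(\<Union>m\<in>{1..M}. Lam m) = box d (\<lambda>_. - int L) (\<lambda>_. int L)"
    and "\<forall>m\<in>{1..M}. 0 < \<beta> m"
  shows "AE \<omega> in P.
     opnorm (box d (\<lambda>_. - int L) (\<lambda>_. int L))
       (mmul (box d (\<lambda>_. - int L) (\<lambda>_. int L))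
          (Dminus d (k \<omega>) M Lam \<beta>)
          (matfun sqrt (box d (\<lambda>_. - int L) (\<lambda>_. int L))
             (hmat d (k \<omega>) (box d (\<lambda>_. - int L) (\<lambda>_. int L)))))
     \<le> sqrt (real (max_degree M Lam) + 1)"
proof -
  let ?B = "box d (\<lambda>_. - int L) (\<lambda>_. int L)"
  have len: "\<forall>x\<in>?B. length x = d"
    by (simp add: box_def)
  have "\<nu> t = 0" if "t < 0" for t
    using closure_subset[of "{t. \<nu> t \<noteq> 0}"] assms(7) that by fastforce
  then have "AE \<omega> in P. \<forall>x\<in>?B. 0 \<le> k \<omega> x"
    using assms(8) AE_nonneg_if_density_vanishes_on_negatives
    by (intro AE_finite_allI[OF finite_box]) blast
  then show ?thesis
    by (rule eventually_mono) (intro opnorm_Dminus_sqrt_hmat_le[OF finite_box len assms(11,12)])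
qed

end
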